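(* Let $\mathbf p$ be a probability vector with strictly positive entries and fix $\varepsilon>0$ such that $1-\varepsilon>\max_{n,i}\lambda_i^{(n)}$. There exists a constant $C_1=C_1(F,\mathbf p,\varepsilon)<\infty$ such that for all $\mathbf i\in\Sigma$ and $0<R\le1$, \[ \frac{\mu_{\mathbf p}(B_{\mathbf i}(R))}{\mu_{\mathbf p}(B_{\mathbf i}((1-\varepsilon)R))}\le C_1. \]
   Context: Setting: $\mathcal I=\{1,\dots,N\}$, $f_i(x)=A_ix+t_i$ on $\mathbb R^d$ with $A_i=\mathrm{diag}(\lambda_i^{(1)},\dots,\lambda_i^{(d)})$, all $\lambda_i^{(n)}\in(0,1)$, $f_i([0,1]^d)\subset[0,1]^d$, no two maps agree on $[0,1]^d$, and for all $m\ne n$ some $i$ has $\lambda_i^{(n)}\ne\lambda_i^{(m)}$; $F$ is the attractor. $\Sigma=\mathcal I^{\mathbb N}$, $\mu_{\mathbf p}=\mathbf p^{\mathbb N}$. For $\mathbf i\in\Sigma$, $r>0$, $L_{\mathbf i}(r,n)$ is the unique integer with $\prod_{\ell=1}^{L_{\mathbf i}(r,n)}\lambda_{i_\ell}^{(n)}\le r<\prod_{\ell=1}^{L_{\mathbf i}(r,n)-1}\lambda_{i_\ell}^{(n)}$. $\mathbf i$ determines a $\sigma$-ordered cube at scale $r$ if $L_{\mathbf i}(r,\sigma_d)\le\dots\le L_{\mathbf i}(r,\sigma_1)$, ties resolved by: if coordinates $k<m$ have $L_{\mathbf i}(r,k)=L_{\mathbf i}(r,m)$ then $k$ precedes $m$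 iff $\prod_{\ell=1}^{L_{\mathbf i}(r,k)}\lambda_{i_\ell}^{(k)}\ge\prod_{\ell=1}^{L_{\mathbf i}(r,k)}\lambda_{i_\ell}^{(m)}$; write $\sigma_{\mathbf i}(r)$ for this ordering. $E_n^\sigma$: span of coordinate axes $\sigma_1,\dots,\sigma_n$; $f_i,f_j$ overlap exactly on $E_n^\sigma$ if their orthogonal projections onto $E_n^\sigma$ agree on $[0,1]^d$. For $1\le n\le d-1$, $\mathcal I_n^\sigma$ is the set of $j$ such that no $i<j$ overlaps exactly with $j$ on $E_n^\sigma$; $\mathcal I_d^\sigma=\mathcal I$; $\Pi_n^\sigma j$ is the unique element of $\mathcal I_n^\sigma$ overlapping exactly with $j$ on $E_n^\sigma$, extended to $\Sigma$ coordinatewise. The symbolic approximate cube is $B_{\mathbf i}(r)=\{\mathbf j\in\Sigma:|\Pi_n^\sigma\mathbf j\wedge\Pi_n^\sigma\mathbf i|\ge L_{\mathbf i}(r,\sigma_n)\ \forall\,1\le n\le d\}$ with $\sigma=\sigma_{\mathbf i}(r)$ and $\wedge$ the longest common prefix. *)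

theory Defs
  imports "HOL-Probability.Probability"
begin

text \<open>Coordinates are indexed by 1..d, maps by 1..N. Points of R^d are functions
  nat => real (only coordinates 1..d matter).  Symbolic sequences are nat => nat, with
  the sequence position l (1-based in the paper) stored at index l-1.\<close>

definition fmap :: "(nat \<Rightarrow> nat \<Rightarrow> real) \<Rightarrow> (nat \<Rightarrow> nat \<Rightarrow> real) \<Rightarrow> nat \<Rightarrow> (nat \<Rightarrow> real) \<Rightarrow> nat \<Rightarrow> real" where
  "fmap lam t i x n = lam i n * x n + t i n"

definition unit_cube :: "nat \<Rightarrow> (nat \<Rightarrow> real) set" where
  "unit_cube d = {x. \<forall>n\<in>{1..d}. x n \<in> {0..1}}"

definition SigmaN :: "nat \<Rightarrow> (nat \<Rightarrow> nat) set" where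
  "SigmaN N = {ii. \<forall>l. ii l \<in> {1..N}}"

text \<open>L_i(r,n): the least L with prod_{l=1}^L lam_{i_l}^{(n)} <= r
  (for 0<r<1 this is the unique integer of the paper; for r = 1 it is 0).\<close>
definition Lfun :: "(nat \<Rightarrow> nat \<Rightarrow> real) \<Rightarrow> (nat \<Rightarrow> nat) \<Rightarrow> real \<Rightarrow> nat \<Rightarrow> nat" where
  "Lfun lam ii r n = (LEAST L. (\<Prod>l<L. lam (ii l) n) \<le> r)"

definition Pfun :: "(nat \<Rightarrow> nat \<Rightarrow> real) \<Rightarrow> (nat \<Rightarrow> nat) \<Rightarrow> nat \<Rightarrow> nat \<Rightarrow> real" where
  "Pfun lam ii L n = (\<Prod>l<L. lam (ii l) n)"

definition precedes :: "(nat \<Rightarrow> nat \<Rightarrow> real) \<Rightarrow> (nat \<Rightarrow> nat) \<Rightarrow> real \<Rightarrow> nat \<Rightarrow> nat \<Rightarrow> bool" where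
  "precedes lam ii r a b \<longleftrightarrow> a \<noteq> b \<and>
     (Lfun lam ii r b < Lfun lam ii r a \<or>
      (Lfun lam ii r a = Lfun lam ii r b \<and>
        (if a < b then Pfun lam ii (Lfun lam ii r a) a \<ge> Pfun lam ii (Lfun lam ii r a) b
         else Pfun lam ii (Lfun lam ii r a) a > Pfun lam ii (Lfun lam ii r a) b)))"

definition sigma_ord :: "(nat \<Rightarrow> nat \<Rightarrow> real) \<Rightarrow> nat \<Rightarrow> (nat \<Rightarrow> nat) \<Rightarrow> real \<Rightarrow> nat \<Rightarrow> nat" where
  "sigma_ord lam d ii r n =
     (THE c. c \<in> {1..d} \<and> card {c' \<in> {1..d}. precedes lam ii r c' c} = n - 1)"

text \<open>E_n^sigma is spanned by the axes sigma_1..sigma_n; overlapping exactly on it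
  means the corresponding coordinates of f_i and f_j agree on the unit cube.\<close>
definition overlap_exact :: "(nat \<Rightarrow> nat \<Rightarrow> real) \<Rightarrow> (nat \<Rightarrow> nat \<Rightarrow> real) \<Rightarrow> nat \<Rightarrow> (nat \<Rightarrow> nat) \<Rightarrow> nat \<Rightarrow> nat \<Rightarrow> nat \<Rightarrow> bool" where
  "overlap_exact lam t d sig n i j \<longleftrightarrow>
     (\<forall>x\<in>unit_cube d. \<forall>c\<in>sig ` {1..n}. fmap lam t i x c = fmap lam t j x c)"

definition Iset :: "(nat \<Rightarrow> nat \<Rightarrow> real) \<Rightarrow> (nat \<Rightarrow> nat \<Rightarrow> real) \<Rightarrow> nat \<Rightarrow> nat \<Rightarrow> (nat \<Rightarrow> nat) \<Rightarrow> nat \<Rightarrow> nat set" where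
  "Iset lam t d N sig n =
     (if n = d then {1..N}
      else {j \<in> {1..N}. \<not> (\<exists>i\<in>{1..N}. i < j \<and> overlap_exact lam t d sig n i j)})"

definition Pi_proj :: "(nat \<Rightarrow> nat \<Rightarrow> real) \<Rightarrow> (nat \<Rightarrow> nat \<Rightarrow> real) \<Rightarrow> nat \<Rightarrow> nat \<Rightarrow> (nat \<Rightarrow> nat) \<Rightarrow> nat \<Rightarrow> nat \<Rightarrow> nat" where
  "Pi_proj lam t d N sig n j =
     (THE k. k \<in> Iset lam t d N sig n \<and> overlap_exact lam t d sig n k j)"

definition lcp :: "(nat \<Rightarrow> nat) \<Rightarrow> (nat \<Rightarrow> nat) \<Rightarrow> enat" where
  "lcp x y = (if x = y then \<infinity> else enat (LEAST k. x k \<noteq> y k))"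

definition approx_cube :: "(nat \<Rightarrow> nat \<Rightarrow> real) \<Rightarrow> (nat \<Rightarrow> nat \<Rightarrow> real) \<Rightarrow> nat \<Rightarrow> nat \<Rightarrow> (nat \<Rightarrow> nat) \<Rightarrow> real \<Rightarrow> (nat \<Rightarrow> nat) set" where
  "approx_cube lam t d N ii r =
     (let sig = sigma_ord lam d ii r in
      {jj \<in> SigmaN N. \<forall>n\<in>{1..d}.
          enat (Lfun lam ii r (sig n))
            \<le> lcp (Pi_proj lam t d N sig n \<circ> jj) (Pi_proj lam t d N sig n \<circ> ii)})"

definition bernoulli_measure :: "nat pmf \<Rightarrow> (nat \<Rightarrow> nat) measure" where
  "bernoulli_measure p = (\<Pi>\<^sub>M l\<in>UNIV. measure_pmf p)"

end

theory Submission
  imports Defs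
begin

text \<open>A sequence j lies in the approximate cube B_i(r) iff, at every position l, the
  digits j_l and i_l agree on every coordinate c with l < L_i(r,c). So B_i(r) is a
  cylinder and its Bernoulli measure is a product over l of p-masses of such
  agreement classes. Shrinking r by the factor 1 - \<epsilon>, which exceeds every contraction
  ratio, raises each L_i(r,c) by at most one; hence the factors for r and for
  (1 - \<epsilon>)r can only differ at the at most d positions l = L_i(r,c), and there the
  factor for (1 - \<epsilon>)r is at least min p because its class contains i_l. The ratio is
  therefore at most (min p)^(-d).\<close>

lemma measure_bernoulli_cylinder:
  fixes p :: "nat pmf" and A :: "nat \<Rightarrow> nat set"
  assumes p_support: "set_pmf p = {1..N}"
  shows "measure (bernoulli_measure p) {jj \<in> SigmaN N. \<forall>l<M. jj l \<in> A l}
         = (\<Prod>l<M. measure_pmf.prob p (A l))"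
proof -
  interpret product_prob_space "\<lambda>_. measure_pmf p" UNIV
    by unfold_locales
  let ?B = "bernoulli_measure p"
  let ?C = "{x\<in>space ?B. \<forall>l\<in>{..<M}. x l \<in> A l}"
  let ?Z = "\<Union>l. {x\<in>space ?B. x l \<in> - {1..N}}"
  have space_B: "space ?B = UNIV"
    by (simp add: bernoulli_measure_def space_PiM)
  have C_sets: "?C \<in> sets ?B"
    unfolding bernoulli_measure_def by (intro sets.sets_Collect_finite_All sets_Collect_single) auto
  have "emeasure ?B ?C = (\<Prod>l<M. emeasure (measure_pmf p) (A l))"
    unfolding bernoulli_measure_def by (rule emeasure_PiM_Collect) auto
  also have "\<dots> = ennreal (\<Prod>l<M. measure_pmf.prob p (A l))"
    by (simp add: measure_pmf.emeasure_eq_measure prod_ennreal)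
  finally have measure_C: "measure ?B ?C = (\<Prod>l<M. measure_pmf.prob p (A l))"
    by (simp add: measure_def prod_nonneg)
  have "?Z \<in> null_sets ?B"
  proof (rule null_sets_UN)
    fix l
    have "emeasure (measure_pmf p) (- {1..N}) = 0"
      using p_support by (simp add: measure_pmf.emeasure_eq_measure measure_pmf_zero_iff)
    then have "emeasure ?B {x\<in>space ?B. x l \<in> - {1..N}} = 0"
      unfolding bernoulli_measure_def by (subst emeasure_PiM_Collect_single) auto
    then show "{x\<in>space ?B. x l \<in> - {1..N}} \<in> null_sets ?B"
      unfolding bernoulli_measure_def by (intro null_setsI sets_Collect_single) auto
  qed
  moreover have "{jj \<in> SigmaN N. \<forall>l<M. jj l \<in> A l} = ?C - ?Z"
    by (auto simp: SigmaN_def space_B)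
  ultimately show ?thesis
    using C_sets measure_C by (simp add: measure_Diff_null_set)
qed

lemma pmf_uniform_lower_bound:
  assumes "finite (set_pmf p)"
  shows "\<exists>b>0. b \<le> 1 \<and> (\<forall>x\<in>set_pmf p. b \<le> pmf p x)"
proof (intro exI conjI ballI)
  let ?b = "Min (pmf p ` set_pmf p)"
  have "?b \<in> pmf p ` set_pmf p"
    using assms set_pmf_not_empty by (intro Min_in) auto
  then show "0 < ?b" "?b \<le> 1"
    by (auto simp: pmf_positive pmf_le_1)
  show "?b \<le> pmf p x" if "x \<in> set_pmf p" for x
    using assms that by (intro Min_le) auto
qed

lemma prod_ge_power_mult_prod:
  fixes f g :: "'a \<Rightarrow> real"
  assumes "finite S" "finite D" "card D \<le> k" "0 < b" "b \<le> 1"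
    and f_range: "\<And>x. 0 \<le> f x \<and> f x \<le> 1"
    and g_lower: "\<And>x. b \<le> g x"
    and agree: "\<And>x. x \<notin> D \<Longrightarrow> f x = g x"
  shows "b ^ k * prod f S \<le> prod g S"
proof -
  have "b ^ k \<le> b ^ card (S \<inter> D)"
    using assms(2-5) card_mono[of D "S \<inter> D"] by (intro power_decreasing) auto
  then have "b ^ k * prod f S \<le> b ^ card (S \<inter> D) * prod f S"
    using f_range by (intro mult_right_mono prod_nonneg) auto
  also have "\<dots> = (\<Prod>x\<in>S. (if x \<in> D then b else 1) * f x)"
    using assms(1) by (simp add: prod.distrib prod.If_cases Int_def)
  also have "\<dots> \<le> prod g S"
  proof (rule prod_mono)
    fix x
    have "b * f x \<le> g x"
      using mult_left_le[of "f x" b] f_range[of x] g_lower[of x] \<open>0 < b\<close> by linarith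
    then show "0 \<le> (if x \<in> D then b else 1) * f x \<and> (if x \<in> D then b else 1) * f x \<le> g x"
      using f_range[of x] agree[of x] \<open>0 < b\<close> by auto
  qed
  finally show ?thesis .
qed

section \<open>The coordinate ordering \<sigma>_i(r)\<close>

definition rank_in :: "('a \<Rightarrow> 'a \<Rightarrow> bool) \<Rightarrow> 'a set \<Rightarrow> 'a \<Rightarrow> nat" where
  "rank_in P S x = card {y \<in> S. P y x}"

lemma rank_in_strict_mono:
  assumes "finite S" "irreflp P" "transp P" "x \<in> S" "y \<in> S" "P x y"
  shows "rank_in P S x < rank_in P S y"
proof -
  have "{z \<in> S. P z x} \<subseteq> {z \<in> S. P z y}"
    using transpD[OF \<open>transp P\<close> _ \<open>P x y\<close>] by blast
  moreover have "x \<in> {z \<in> S. P z y} - {z \<in> S. P z x}"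
    using assms(4,6) irreflpD[OF \<open>irreflp P\<close>] by blast
  ultimately have "{z \<in> S. P z x} \<subset> {z \<in> S. P z y}"
    by blast
  then show ?thesis
    unfolding rank_in_def using \<open>finite S\<close> by (intro psubset_card_mono) auto
qed

lemma bij_betw_rank_in:
  assumes "finite S" "irreflp P" "transp P" "totalp_on S P"
  shows "bij_betw (rank_in P S) S {..<card S}"
proof -
  have inj: "inj_on (rank_in P S) S"
  proof (rule inj_onI, rule ccontr)
    fix x y assume xy: "x \<in> S" "y \<in> S" "rank_in P S x = rank_in P S y" "x \<noteq> y"
    then consider "P x y" | "P y x"
      using totalp_onD[OF \<open>totalp_on S P\<close>] by blast
    then show False
      using rank_in_strict_mono[OF assms(1-3)] xy by cases (metis less_irrefl)+
  qed
  have "rank_in P S x < card S" if "x \<in> S" for x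
  proof -
    have "rank_in P S x \<le> card (S - {x})"
      unfolding rank_in_def using assms(1) irreflpD[OF \<open>irreflp P\<close>] by (intro card_mono) auto
    also have "\<dots> < card S"
      using assms(1) that by (rule card_Diff1_less)
    finally show ?thesis .
  qed
  then have "rank_in P S ` S \<subseteq> {..<card S}"
    by auto
  moreover have "card (rank_in P S ` S) = card {..<card S}"
    using card_image[OF inj] by simp
  ultimately show ?thesis
    using inj by (simp add: bij_betw_def card_subset_eq)
qed

lemma irreflp_precedes: "irreflp (precedes lam ii r)"
  unfolding precedes_def by (simp add: irreflpI)

lemma totalp_on_precedes: "totalp_on A (precedes lam ii r)"
  unfolding precedes_def
  by (rule totalp_onI, cases "Lfun lam ii r x" "Lfun lam ii r y" rule: linorder_cases) auto

lemma precedes_asym: "precedes lam ii r a b \<Longrightarrow> \<not> precedes lam ii r b a"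
  unfolding precedes_def by (cases "Lfun lam ii r a" "Lfun lam ii r b" rule: linorder_cases) auto

lemma transp_precedes: "transp (precedes lam ii r)"
proof (rule transpI)
  fix a b c assume ab: "precedes lam ii r a b" and bc: "precedes lam ii r b c"
  then have "a \<noteq> c"
    using precedes_asym by metis
  then show "precedes lam ii r a c"
  proof (cases "Lfun lam ii r a = Lfun lam ii r b \<and> Lfun lam ii r b = Lfun lam ii r c")
    case True
    then show ?thesis
      using ab bc \<open>a \<noteq> c\<close> unfolding precedes_def by (cases "a < b"; cases "b < c"; cases "a < c") auto
  qed (use ab bc in \<open>auto simp: precedes_def\<close>)
qed

lemma Lfun_le_if_precedes: "precedes lam ii r a b \<Longrightarrow> Lfun lam ii r b \<le> Lfun lam ii r a"
  unfolding precedes_def by auto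

lemma bij_betw_rank_in_precedes:
  "bij_betw (rank_in (precedes lam ii r) {1..d}) {1..d} {..<d}"
  using bij_betw_rank_in[OF finite_atLeastAtMost[of 1 d] irreflp_precedes transp_precedes totalp_on_precedes]
  by simp

lemma sigma_ord_rank:
  assumes "n \<in> {1..d}"
  shows "sigma_ord lam d ii r n \<in> {1..d} \<and>
    rank_in (precedes lam ii r) {1..d} (sigma_ord lam d ii r n) = n - 1"
proof -
  let ?rk = "rank_in (precedes lam ii r) {1..d}"
  have bij: "bij_betw ?rk {1..d} {..<d}"
    by (rule bij_betw_rank_in_precedes)
  have "n - 1 \<in> {..<d}"
    using assms by auto
  then have "n - 1 \<in> ?rk ` {1..d}"
    unfolding bij_betw_imp_surj_on[OF bij] .
  then obtain c where c: "c \<in> {1..d}" "?rk c = n - 1"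
    by (metis imageE)
  have "\<exists>!c. c \<in> {1..d} \<and> ?rk c = n - 1"
  proof (rule ex1I[of _ c])
    fix c' assume "c' \<in> {1..d} \<and> ?rk c' = n - 1"
    then show "c' = c"
      using inj_onD[OF bij_betw_imp_inj_on[OF bij], of c' c] c by simp
  qed (use c in simp)
  then have "(THE c. c \<in> {1..d} \<and> ?rk c = n - 1) \<in> {1..d} \<and>
      ?rk (THE c. c \<in> {1..d} \<and> ?rk c = n - 1) = n - 1"
    by (rule theI')
  then show ?thesis
    unfolding sigma_ord_def rank_in_def .
qed

lemma sigma_ord_image: "sigma_ord lam d ii r ` {1..d} = {1..d}"
proof (intro equalityI subsetI)
  let ?rk = "rank_in (precedes lam ii r) {1..d}"
  fix c assume c: "c \<in> {1..d}"
  have bij: "bij_betw ?rk {1..d} {..<d}"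
    by (rule bij_betw_rank_in_precedes)
  have "?rk c < d"
    using bij_betw_apply[OF bij c] by simp
  then have n: "Suc (?rk c) \<in> {1..d}"
    by simp
  have "?rk (sigma_ord lam d ii r (Suc (?rk c))) = ?rk c"
    using sigma_ord_rank[OF n] by simp
  then have "sigma_ord lam d ii r (Suc (?rk c)) = c"
    using inj_onD[OF bij_betw_imp_inj_on[OF bij]] sigma_ord_rank[OF n] c by metis
  then show "c \<in> sigma_ord lam d ii r ` {1..d}"
    using n by (metis imageI)
next
  fix c assume "c \<in> sigma_ord lam d ii r ` {1..d}"
  then show "c \<in> {1..d}"
    using sigma_ord_rank by (metis imageE)
qed

lemma Lfun_sigma_ord_antimono:
  assumes "m \<in> {1..d}" "n \<in> {1..d}" "m \<le> n"
  shows "Lfun lam ii r (sigma_ord lam d ii r n) \<le> Lfun lam ii r (sigma_ord lam d ii r m)"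
proof (cases "sigma_ord lam d ii r m = sigma_ord lam d ii r n")
  case False
  let ?rk = "rank_in (precedes lam ii r) {1..d}"
  have "\<not> ?rk (sigma_ord lam d ii r n) < ?rk (sigma_ord lam d ii r m)"
    using sigma_ord_rank[OF assms(1)] sigma_ord_rank[OF assms(2)] assms(3) by simp
  then have "\<not> precedes lam ii r (sigma_ord lam d ii r n) (sigma_ord lam d ii r m)"
    using rank_in_strict_mono[OF finite_atLeastAtMost irreflp_precedes transp_precedes]
      sigma_ord_rank[OF assms(1)] sigma_ord_rank[OF assms(2)] by metis
  then have "precedes lam ii r (sigma_ord lam d ii r m) (sigma_ord lam d ii r n)"
    using False totalp_onD[OF totalp_on_precedes] by (metis UNIV_I)
  then show ?thesis
    by (rule Lfun_le_if_precedes)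
qed simp

lemma overlap_exact_refl: "overlap_exact lam t d sig n i i"
  unfolding overlap_exact_def by simp

lemma overlap_exact_sym: "overlap_exact lam t d sig n i j \<Longrightarrow> overlap_exact lam t d sig n j i"
  unfolding overlap_exact_def by simp

lemma overlap_exact_trans:
  "overlap_exact lam t d sig n i j \<Longrightarrow> overlap_exact lam t d sig n j k \<Longrightarrow>
    overlap_exact lam t d sig n i k"
  unfolding overlap_exact_def by simp

text \<open>The hypothesis makes the special case n = d of the definition of Iset agree with
  the general one.\<close>
lemma Iset_eq_minimal:
  assumes "\<forall>i\<in>{1..N}. \<forall>j\<in>{1..N}. overlap_exact lam t d sig d i j \<longrightarrow> i = j"
  shows "Iset lam t d N sig n =
    {j \<in> {1..N}. \<not> (\<exists>i\<in>{1..N}. i < j \<and> overlap_exact lam t d sig n i j)}"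
proof (cases "n = d")
  case True
  have "\<not> (i < j \<and> overlap_exact lam t d sig n i j)" if "i \<in> {1..N}" "j \<in> {1..N}" for i j
    using assms that True by (metis less_irrefl)
  then show ?thesis
    unfolding Iset_def using True by auto
qed (simp add: Iset_def)

lemma Pi_proj_ex1:
  assumes "j \<in> {1..N}"
    and top_eq: "\<forall>i\<in>{1..N}. \<forall>j\<in>{1..N}. overlap_exact lam t d sig d i j \<longrightarrow> i = j"
  shows "\<exists>!k. k \<in> Iset lam t d N sig n \<and> overlap_exact lam t d sig n k j"
proof -
  let ?E = "overlap_exact lam t d sig n"
  let ?P = "\<lambda>k. k \<in> {1..N} \<and> ?E k j"
  define k0 where "k0 = (LEAST k. ?P k)"
  have k0: "k0 \<in> {1..N}" "?E k0 j"
    using LeastI[of ?P j] assms(1) overlap_exact_refl unfolding k0_def by auto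
  have least: "k0 \<le> i" if "i \<in> {1..N}" "?E i k0" for i
    unfolding k0_def using that k0 overlap_exact_trans by (intro Least_le) metis
  show ?thesis
  proof (rule ex1I[of _ k0])
    have "\<not> (i < k0 \<and> ?E i k0)" if "i \<in> {1..N}" for i
      using least[OF that] by auto
    then show "k0 \<in> Iset lam t d N sig n \<and> ?E k0 j"
      using k0 unfolding Iset_eq_minimal[OF top_eq] by simp
  next
    fix k assume k: "k \<in> Iset lam t d N sig n \<and> ?E k j"
    then have k_min: "k \<in> {1..N}" "\<not> (k0 < k \<and> ?E k0 k)"
      using k0(1) unfolding Iset_eq_minimal[OF top_eq] by auto
    have "?E k k0" "?E k0 k"
      using k k0(2) overlap_exact_sym overlap_exact_trans by metis+
    then show "k = k0"
      using least[OF k_min(1)] k_min(2) by simp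
  qed
qed

lemma Pi_proj_eq_iff:
  assumes "i \<in> {1..N}" "j \<in> {1..N}"
    and top_eq: "\<forall>i\<in>{1..N}. \<forall>j\<in>{1..N}. overlap_exact lam t d sig d i j \<longrightarrow> i = j"
  shows "Pi_proj lam t d N sig n j = Pi_proj lam t d N sig n i \<longleftrightarrow> overlap_exact lam t d sig n j i"
proof -
  let ?E = "overlap_exact lam t d sig n"
  have proj: "Pi_proj lam t d N sig n k \<in> Iset lam t d N sig n \<and> ?E (Pi_proj lam t d N sig n k) k"
    if "k \<in> {1..N}" for k
    unfolding Pi_proj_def by (rule theI'[OF Pi_proj_ex1[OF that top_eq]])
  show ?thesis
  proof
    assume "Pi_proj lam t d N sig n j = Pi_proj lam t d N sig n i"
    then show "?E j i"
      using proj[OF assms(1)] proj[OF assms(2)] overlap_exact_sym overlap_exact_trans by metis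
  next
    assume "?E j i"
    then have "?E (Pi_proj lam t d N sig n i) j"
      using proj[OF assms(1)] overlap_exact_sym overlap_exact_trans by metis
    then show "Pi_proj lam t d N sig n j = Pi_proj lam t d N sig n i"
      using Pi_proj_ex1[OF assms(2) top_eq] proj[OF assms(1)] proj[OF assms(2)] by metis
  qed
qed

section \<open>The approximate cube as a cylinder\<close>

lemma enat_le_lcp_iff: "enat L \<le> lcp f g \<longleftrightarrow> (\<forall>l<L. f l = g l)"
proof (cases "f = g")
  case False
  define k0 where "k0 = (LEAST k. f k \<noteq> g k)"
  obtain k where "f k \<noteq> g k"
    using False by auto
  then have k0: "f k0 \<noteq> g k0"
    unfolding k0_def by (rule LeastI)
  have below: "f l = g l" if "l < k0" for l
    using not_less_Least[OF that[unfolded k0_def]] by blast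
  have "L \<le> k0 \<longleftrightarrow> (\<forall>l<L. f l = g l)"
  proof
    assume "\<forall>l<L. f l = g l"
    then show "L \<le> k0"
      using k0 not_le by blast
  qed (use below in simp)
  then show ?thesis
    using False by (simp add: lcp_def k0_def)
qed (simp add: lcp_def)

definition maps_agree_on ::
    "(nat \<Rightarrow> nat \<Rightarrow> real) \<Rightarrow> (nat \<Rightarrow> nat \<Rightarrow> real) \<Rightarrow> nat \<Rightarrow> nat set \<Rightarrow> nat \<Rightarrow> nat \<Rightarrow> bool" where
  "maps_agree_on lam t d S i j \<longleftrightarrow> (\<forall>c\<in>S. \<forall>x\<in>unit_cube d. fmap lam t i x c = fmap lam t j x c)"

lemma maps_agree_on_refl: "maps_agree_on lam t d S i i"
  unfolding maps_agree_on_def by simp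

lemma maps_agree_on_UN:
  "maps_agree_on lam t d (\<Union>n\<in>A. S n) i j \<longleftrightarrow> (\<forall>n\<in>A. maps_agree_on lam t d (S n) i j)"
  unfolding maps_agree_on_def by blast

lemma overlap_exact_iff_maps_agree_on:
  "overlap_exact lam t d sig n i j \<longleftrightarrow> maps_agree_on lam t d (sig ` {1..n}) i j"
  unfolding overlap_exact_def maps_agree_on_def by blast

definition maps_pairwise_distinct ::
    "(nat \<Rightarrow> nat \<Rightarrow> real) \<Rightarrow> (nat \<Rightarrow> nat \<Rightarrow> real) \<Rightarrow> nat \<Rightarrow> nat \<Rightarrow> bool" where
  "maps_pairwise_distinct lam t d N \<longleftrightarrow>
    (\<forall>i\<in>{1..N}. \<forall>j\<in>{1..N}. maps_agree_on lam t d {1..d} i j \<longrightarrow> i = j)"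

lemma overlap_exact_top_imp_eq:
  assumes "maps_pairwise_distinct lam t d N"
  shows "\<forall>i\<in>{1..N}. \<forall>j\<in>{1..N}. overlap_exact lam t d (sigma_ord lam d ii r) d i j \<longrightarrow> i = j"
  using assms
  unfolding maps_pairwise_distinct_def overlap_exact_iff_maps_agree_on sigma_ord_image .

definition active_coords :: "(nat \<Rightarrow> nat \<Rightarrow> real) \<Rightarrow> nat \<Rightarrow> (nat \<Rightarrow> nat) \<Rightarrow> real \<Rightarrow> nat \<Rightarrow> nat set" where
  "active_coords lam d ii r l = {c \<in> {1..d}. l < Lfun lam ii r c}"

lemma active_coords_eq_UN:
  "active_coords lam d ii r l =
    (\<Union>n\<in>{n \<in> {1..d}. l < Lfun lam ii r (sigma_ord lam d ii r n)}. sigma_ord lam d ii r ` {1..n})"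
    (is "_ = (\<Union>n\<in>?A. ?B n)")
proof (intro equalityI subsetI)
  fix c assume "c \<in> active_coords lam d ii r l"
  then have c: "c \<in> {1..d}" "l < Lfun lam ii r c"
    unfolding active_coords_def by auto
  have "c \<in> sigma_ord lam d ii r ` {1..d}"
    using c(1) unfolding sigma_ord_image .
  then obtain n where n: "n \<in> {1..d}" "c = sigma_ord lam d ii r n"
    by (rule imageE)
  then have "n \<in> ?A"
    using c by simp
  moreover have "c \<in> ?B n"
    using n by (intro rev_image_eqI[of n]) auto
  ultimately show "c \<in> (\<Union>n\<in>?A. ?B n)"
    by (rule UN_I)
next
  fix c assume "c \<in> (\<Union>n\<in>?A. ?B n)"
  then obtain n where "n \<in> ?A" and c: "c \<in> ?B n"
    by (rule UN_E)
  then have n: "n \<in> {1..d}" "l < Lfun lam ii r (sigma_ord lam d ii r n)"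
    by simp_all
  from c obtain m where m: "m \<in> {1..n}" "c = sigma_ord lam d ii r m"
    by (rule imageE)
  then have "m \<in> {1..d}"
    using n(1) by simp
  moreover have "Lfun lam ii r (sigma_ord lam d ii r n) \<le> Lfun lam ii r (sigma_ord lam d ii r m)"
    using Lfun_sigma_ord_antimono[OF \<open>m \<in> {1..d}\<close> n(1)] m(1) by simp
  ultimately show "c \<in> active_coords lam d ii r l"
    using sigma_ord_rank[of m d] n(2) m(2) unfolding active_coords_def by simp
qed

lemma approx_cube_eq_active_coords:
  assumes ii: "ii \<in> SigmaN N"
    and distinct: "maps_pairwise_distinct lam t d N"
  shows "approx_cube lam t d N ii r =
    {jj \<in> SigmaN N. \<forall>l. maps_agree_on lam t d (active_coords lam d ii r l) (jj l) (ii l)}"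
proof -
  let ?sig = "sigma_ord lam d ii r"
  let ?L = "Lfun lam ii r"
  have "(\<forall>n\<in>{1..d}. enat (?L (?sig n)) \<le>
          lcp (Pi_proj lam t d N ?sig n \<circ> jj) (Pi_proj lam t d N ?sig n \<circ> ii))
        \<longleftrightarrow> (\<forall>l. maps_agree_on lam t d (active_coords lam d ii r l) (jj l) (ii l))"
    if "jj \<in> SigmaN N" for jj
  proof -
    have digits: "jj l \<in> {1..N}" "ii l \<in> {1..N}" for l
      using that ii unfolding SigmaN_def by auto
    have "(\<forall>n\<in>{1..d}. enat (?L (?sig n)) \<le>
          lcp (Pi_proj lam t d N ?sig n \<circ> jj) (Pi_proj lam t d N ?sig n \<circ> ii))
        \<longleftrightarrow> (\<forall>n\<in>{1..d}. \<forall>l<?L (?sig n). maps_agree_on lam t d (?sig ` {1..n}) (jj l) (ii l))"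
      by (simp only: enat_le_lcp_iff o_def overlap_exact_iff_maps_agree_on
          Pi_proj_eq_iff[OF digits(2) digits(1) overlap_exact_top_imp_eq[OF distinct]])
    also have "\<dots> \<longleftrightarrow> (\<forall>l. maps_agree_on lam t d (active_coords lam d ii r l) (jj l) (ii l))"
      unfolding active_coords_eq_UN maps_agree_on_UN by auto
    finally show ?thesis .
  qed
  then show ?thesis
    unfolding approx_cube_def Let_def by blast
qed

lemma measure_approx_cube:
  assumes ii: "ii \<in> SigmaN N"
    and distinct: "maps_pairwise_distinct lam t d N"
    and p_support: "set_pmf p = {1..N}"
    and depth: "\<And>c. c \<in> {1..d} \<Longrightarrow> Lfun lam ii r c \<le> M"
  shows "measure (bernoulli_measure p) (approx_cube lam t d N ii r) =
    (\<Prod>l<M. measure_pmf.prob p {k. maps_agree_on lam t d (active_coords lam d ii r l) k (ii l)})"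
proof -
  let ?agree = "\<lambda>l k. maps_agree_on lam t d (active_coords lam d ii r l) k (ii l)"
  have "active_coords lam d ii r l = {}" if "M \<le> l" for l
  proof -
    have "\<not> l < Lfun lam ii r c" if "c \<in> {1..d}" for c
      using depth[OF that] \<open>M \<le> l\<close> by simp
    then show ?thesis
      unfolding active_coords_def by auto
  qed
  then have "?agree l k" if "M \<le> l" for l k
    using that by (simp add: maps_agree_on_def)
  then have "(\<forall>l. ?agree l (jj l)) \<longleftrightarrow> (\<forall>l<M. jj l \<in> {k. ?agree l k})" for jj
    by (metis mem_Collect_eq not_le)
  then have "approx_cube lam t d N ii r = {jj \<in> SigmaN N. \<forall>l<M. jj l \<in> {k. ?agree l k}}"
    unfolding approx_cube_eq_active_coords[OF ii distinct] by simp
  then show ?thesis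
    by (simp only: measure_bernoulli_cylinder[OF p_support])
qed

lemma measure_approx_cube_pos:
  assumes ii: "ii \<in> SigmaN N"
    and distinct: "maps_pairwise_distinct lam t d N"
    and p_support: "set_pmf p = {1..N}"
  shows "0 < measure (bernoulli_measure p) (approx_cube lam t d N ii r)"
proof -
  have depth: "Lfun lam ii r c \<le> Max (Lfun lam ii r ` {1..d})" if "c \<in> {1..d}" for c
    using that by (intro Max_ge) auto
  have factor_pos: "0 < measure_pmf.prob p {k. maps_agree_on lam t d S k (ii l)}" for S l
  proof (rule measure_pmf_posI)
    show "ii l \<in> set_pmf p"
      using ii p_support unfolding SigmaN_def by simp
  qed (simp add: maps_agree_on_refl)
  show ?thesis
    using measure_approx_cube[OF ii distinct p_support depth] factor_pos by (simp add: prod_pos)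
qed

section \<open>The cut-off lengths L_i(r,n)\<close>

lemma Lfun_le: "(\<Prod>l<k. lam (ii l) c) \<le> r \<Longrightarrow> Lfun lam ii r c \<le> k"
  unfolding Lfun_def by (rule Least_le)

lemma prod_Lfun_le:
  assumes "0 < r" "q < 1" and lam_bound: "\<And>l. 0 \<le> lam (ii l) c \<and> lam (ii l) c \<le> q"
  shows "(\<Prod>l<Lfun lam ii r c. lam (ii l) c) \<le> r"
proof -
  obtain k where "q ^ k < r"
    using real_arch_pow_inv[OF assms(1,2)] by blast
  moreover have "(\<Prod>l<k. lam (ii l) c) \<le> q ^ k"
    using prod_mono[of "{..<k}" "\<lambda>l. lam (ii l) c" "\<lambda>_. q"] lam_bound by simp
  ultimately have "(\<Prod>l<k. lam (ii l) c) \<le> r"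
    by simp
  then show ?thesis
    unfolding Lfun_def by (rule LeastI)
qed

lemma Lfun_scale_bounds:
  assumes "0 < r" "q < 1" and lam_bound: "\<And>l. 0 < lam (ii l) c \<and> lam (ii l) c \<le> q"
  shows "Lfun lam ii r c \<le> Lfun lam ii (q * r) c"
    and "Lfun lam ii (q * r) c \<le> Suc (Lfun lam ii r c)"
proof -
  have "0 < q"
    using lam_bound[of 0] by simp
  have prod_le: "(\<Prod>l<Lfun lam ii s c. lam (ii l) c) \<le> s" if "0 < s" for s
    using that \<open>q < 1\<close> lam_bound by (intro prod_Lfun_le) (auto simp: less_imp_le)
  have "(\<Prod>l<Lfun lam ii (q * r) c. lam (ii l) c) \<le> q * r"
    using \<open>0 < q\<close> \<open>0 < r\<close> by (intro prod_le) simp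
  also have "\<dots> \<le> r"
    using \<open>0 < r\<close> \<open>q < 1\<close> by simp
  finally show "Lfun lam ii r c \<le> Lfun lam ii (q * r) c"
    by (rule Lfun_le)
  have "(\<Prod>l<Suc (Lfun lam ii r c). lam (ii l) c)
      = (\<Prod>l<Lfun lam ii r c. lam (ii l) c) * lam (ii (Lfun lam ii r c)) c"
    by simp
  also have "\<dots> \<le> r * q"
    using prod_le[OF \<open>0 < r\<close>] lam_bound \<open>0 < r\<close> by (intro mult_mono) (auto simp: less_imp_le)
  finally show "Lfun lam ii (q * r) c \<le> Suc (Lfun lam ii r c)"
    by (intro Lfun_le) (simp add: mult.commute)
qed

lemma measure_approx_cube_scale:
  assumes ii: "ii \<in> SigmaN N"
    and distinct: "maps_pairwise_distinct lam t d N"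
    and p_support: "set_pmf p = {1..N}"
    and b: "0 < b" "b \<le> 1" "\<And>k. k \<in> {1..N} \<Longrightarrow> b \<le> pmf p k"
    and lam_bound: "\<And>i c. i \<in> {1..N} \<Longrightarrow> c \<in> {1..d} \<Longrightarrow> 0 < lam i c \<and> lam i c \<le> q"
    and "q < 1" "0 < r"
  shows "b ^ d * measure (bernoulli_measure p) (approx_cube lam t d N ii r)
    \<le> measure (bernoulli_measure p) (approx_cube lam t d N ii (q * r))"
proof -
  let ?L = "Lfun lam ii r" and ?L' = "Lfun lam ii (q * r)"
  let ?P = "\<lambda>s l. measure_pmf.prob p {k. maps_agree_on lam t d (active_coords lam d ii s l) k (ii l)}"
  have digits: "ii l \<in> {1..N}" for l
    using ii unfolding SigmaN_def by simp
  have L_bounds: "?L c \<le> ?L' c" "?L' c \<le> Suc (?L c)" if "c \<in> {1..d}" for c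
    using Lfun_scale_bounds[OF \<open>0 < r\<close> \<open>q < 1\<close>] lam_bound[OF digits that] by blast+
  define M where "M = Max (?L' ` {1..d})"
  have depth': "?L' c \<le> M" if "c \<in> {1..d}" for c
    unfolding M_def using that by (intro Max_ge) auto
  have depth: "?L c \<le> M" if "c \<in> {1..d}" for c
    using L_bounds(1)[OF that] depth'[OF that] by (rule le_trans)
  have same: "?P r l = ?P (q * r) l" if "l \<notin> ?L ` {1..d}" for l
  proof -
    have "l < ?L c \<longleftrightarrow> l < ?L' c" if "c \<in> {1..d}" for c
      using L_bounds[OF that] \<open>l \<notin> ?L ` {1..d}\<close> that by (cases "l = ?L c") auto
    then have "active_coords lam d ii r l = active_coords lam d ii (q * r) l"
      unfolding active_coords_def by (intro Collect_cong) blast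
    then show ?thesis
      by (simp only:)
  qed
  have lower: "b \<le> ?P (q * r) l" for l
  proof -
    have "b \<le> measure_pmf.prob p {ii l}"
      using b(3)[OF digits] by (simp add: measure_pmf_single)
    also have "\<dots> \<le> ?P (q * r) l"
      by (intro measure_pmf.finite_measure_mono) (auto simp: maps_agree_on_refl)
    finally show ?thesis .
  qed
  have "b ^ d * prod (?P r) {..<M} \<le> prod (?P (q * r)) {..<M}"
  proof (rule prod_ge_power_mult_prod[where D = "?L ` {1..d}"])
    show "card (?L ` {1..d}) \<le> d"
      using card_image_le[of "{1..d}" ?L] by simp
  qed (use b(1,2) lower same in \<open>simp_all add: measure_pmf.prob_le_1\<close>)
  moreover have "measure (bernoulli_measure p) (approx_cube lam t d N ii r) = prod (?P r) {..<M}"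
    by (rule measure_approx_cube[OF ii distinct p_support depth])
  moreover have "measure (bernoulli_measure p) (approx_cube lam t d N ii (q * r)) = prod (?P (q * r)) {..<M}"
    by (rule measure_approx_cube[OF ii distinct p_support depth'])
  ultimately show ?thesis
    by simp
qed

theorem lemma5p5:
  fixes d N :: nat and lam t :: "nat \<Rightarrow> nat \<Rightarrow> real" and p :: "nat pmf" and \<epsilon> :: real
  assumes d_pos: "d \<ge> 1"
    and lam_range: "\<forall>i\<in>{1..N}. \<forall>n\<in>{1..d}. 0 < lam i n \<and> lam i n < 1"
    and maps_into: "\<forall>i\<in>{1..N}. \<forall>x\<in>unit_cube d. (\<lambda>n. fmap lam t i x n) \<in> unit_cube d"
    and maps_distinct: "\<forall>i\<in>{1..N}. \<forall>j\<in>{1..N}. i \<noteq> j \<longrightarrow>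
                          (\<exists>x\<in>unit_cube d. \<exists>n\<in>{1..d}. fmap lam t i x n \<noteq> fmap lam t j x n)"
    and coords_distinct: "\<forall>n\<in>{1..d}. \<forall>m\<in>{1..d}. m \<noteq> n \<longrightarrow> (\<exists>i\<in>{1..N}. lam i n \<noteq> lam i m)"
    and p_support: "set_pmf p = {1..N}"
    and eps_pos: "\<epsilon> > 0"
    and eps_small: "\<forall>i\<in>{1..N}. \<forall>n\<in>{1..d}. lam i n < 1 - \<epsilon>"
  shows "\<exists>C1::real. \<forall>ii\<in>SigmaN N. \<forall>R. 0 < R \<and> R \<le> 1 \<longrightarrow>
           measure (bernoulli_measure p) (approx_cube lam t d N ii R)
             / measure (bernoulli_measure p) (approx_cube lam t d N ii ((1 - \<epsilon>) * R)) \<le> C1"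
proof -
  \<comment> \<open>Of the standing hypotheses, the bound only needs the maps to be distinct, p to have
    full support and every ratio to be below 1 - \<epsilon>.\<close>
  have distinct: "maps_pairwise_distinct lam t d N"
    using maps_distinct unfolding maps_pairwise_distinct_def maps_agree_on_def by meson
  obtain b where b: "0 < b" "b \<le> 1" "\<And>k. k \<in> {1..N} \<Longrightarrow> b \<le> pmf p k"
    using pmf_uniform_lower_bound[of p] p_support by auto
  have lam_bound: "0 < lam i c \<and> lam i c \<le> 1 - \<epsilon>" if "i \<in> {1..N}" "c \<in> {1..d}" for i c
    using lam_range eps_small that by (meson less_imp_le)
  show ?thesis
  proof (intro exI[of _ "1 / b ^ d"] ballI allI impI)
    fix ii and R :: real assume ii: "ii \<in> SigmaN N" and R: "0 < R \<and> R \<le> 1"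
    let ?\<mu> = "\<lambda>r. measure (bernoulli_measure p) (approx_cube lam t d N ii r)"
    have "b ^ d * ?\<mu> R \<le> ?\<mu> ((1 - \<epsilon>) * R)"
      using eps_pos R by (intro measure_approx_cube_scale[OF ii distinct p_support b lam_bound]) auto
    moreover have "0 < ?\<mu> ((1 - \<epsilon>) * R)"
      by (rule measure_approx_cube_pos[OF ii distinct p_support])
    ultimately show "?\<mu> R / ?\<mu> ((1 - \<epsilon>) * R) \<le> 1 / b ^ d"
      using b(1) by (simp add: divide_simps mult.commute)
  qed
qed

end
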